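(* Let $(\Omega,\mu)$ be a measure space, $E\subset\Omega$ with $0<\mu E<\infty$, and let $(v_k)_{k\ge1}$ be a sequence in $L^2_{\mathbb R}(\Omega,\mu)$ such that $\sum_{k\ge1}|v_k(x)|^2\le M^2$ for all $x\in E$, for some constant $M$. Then (1) the map $V:f\mapsto((f,v_k))_{k\ge1}$ is a compact operator from $L^2(E,\mu)$ to $\ell^2$, and (2) the map $V^*:(c_k)_{k\ge1}\mapsto\sum_{k\ge1}c_kv_k|_E$ is a compact operator from $\ell^2$ to $L^2(E,\mu)$.
   Context: Functions in $L^2(E,\mu)$ are regarded as functions on $\Omega$ vanishing outside $E$, and $(f,g)=\int fg\,d\mu$. *)

theory Defs
  imports "HOL-Analysis.Analysis"
begin

definition L2 :: "'a measure \<Rightarrow> ('a \<Rightarrow> real) set" where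
  "L2 M = {f \<in> borel_measurable M. integrable M (\<lambda>x. (f x)\<^sup>2)}"

text \<open>L^2(E, mu), regarded as functions on Omega vanishing outside E.\<close>
definition L2_on :: "'a measure \<Rightarrow> 'a set \<Rightarrow> ('a \<Rightarrow> real) set" where
  "L2_on M E = {f \<in> L2 M. \<forall>x \<in> space M - E. f x = 0}"

definition L2_norm :: "'a measure \<Rightarrow> ('a \<Rightarrow> real) \<Rightarrow> real" where
  "L2_norm M f = sqrt (\<integral>x. (f x)\<^sup>2 \<partial>M)"

definition L2_inner :: "'a measure \<Rightarrow> ('a \<Rightarrow> real) \<Rightarrow> ('a \<Rightarrow> real) \<Rightarrow> real" where
  "L2_inner M f g = (\<integral>x. f x * g x \<partial>M)"

text \<open>Real l^2 (sequences indexed by nat; index 0 plays the role of index 1).\<close>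
definition l2 :: "(nat \<Rightarrow> real) set" where
  "l2 = {c. summable (\<lambda>k. (c k)\<^sup>2)}"

definition l2_norm :: "(nat \<Rightarrow> real) \<Rightarrow> real" where
  "l2_norm c = sqrt (\<Sum>k. (c k)\<^sup>2)"

text \<open>Compact (linear) operator T from the normed function space (X, nX) to (Y, nY):
  T maps X into Y, is linear, and maps bounded sequences to sequences having a
  subsequence converging in Y (i.e. images of bounded sets are relatively compact).\<close>
definition compact_operator ::
  "('p \<Rightarrow> real) set \<Rightarrow> (('p \<Rightarrow> real) \<Rightarrow> real) \<Rightarrow> ('q \<Rightarrow> real) set \<Rightarrow> (('q \<Rightarrow> real) \<Rightarrow> real)
   \<Rightarrow> (('p \<Rightarrow> real) \<Rightarrow> ('q \<Rightarrow> real)) \<Rightarrow> bool" where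
  "compact_operator X nX Y nY T \<longleftrightarrow>
     (\<forall>f\<in>X. T f \<in> Y) \<and>
     (\<forall>f\<in>X. \<forall>g\<in>X. \<forall>a b::real. T (\<lambda>x. a * f x + b * g x) = (\<lambda>y. a * T f y + b * T g y)) \<and>
     (\<forall>(s::nat \<Rightarrow> 'p \<Rightarrow> real) B. (\<forall>n. s n \<in> X \<and> nX (s n) \<le> B) \<longrightarrow>
        (\<exists>r h. strict_mono r \<and> h \<in> Y \<and> (\<lambda>n. nY (\<lambda>y. T (s (r n)) y - h y)) \<longlonglongrightarrow> 0))"

end

theory Submission
  imports Defs
begin

(* Put c k = \<integral>\<^sub>E (v k)\<^sup>2, so that \<Sum> c k \<le> M\<^sup>2 \<mu>(E) < \<infinity>. By Cauchy-Schwarz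
   (f, v k)\<^sup>2 \<le> \<parallel>f\<parallel>\<^sup>2 c k, hence V maps bounded sets into a Hilbert cube
   {a. \<forall>k. (a k)\<^sup>2 \<le> C c k}; by Tychonoff a sequence in it has a coordinatewise convergent
   subsequence, and Tannery's theorem turns coordinatewise into l2 convergence.
   For V*, a bounded sequence in l2 has a coordinatewise convergent subsequence whose differences
   e n to the limit stay bounded in l2. Such e n tend to 0 weakly, so \<Sum>k. e n k * v k x \<rightarrow> 0
   for every x \<in> E, while pointwise Cauchy-Schwarz bounds (V* e n)\<^sup>2 by a constant on E;
   dominated convergence then gives V* e n \<rightarrow> 0 in L2. *)

lemma nonneg_quadratic_imp_discriminant_le:
  fixes A C G :: real
  assumes nonneg: "\<And>t. 0 \<le> A - 2*t*C + t\<^sup>2*G" and "0 \<le> G"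
  shows "C\<^sup>2 \<le> A*G"
proof (cases "G = 0")
  case True
  have "C = 0"
  proof (rule ccontr)
    assume "C \<noteq> 0"
    have "0 \<le> A - 2*((A+1)/(2*C))*C + ((A+1)/(2*C))\<^sup>2*G" by (rule nonneg)
    with True \<open>C \<noteq> 0\<close> show False by simp
  qed
  then show ?thesis using True by simp
next
  case False
  then have G: "G > 0" using \<open>0 \<le> G\<close> by simp
  have "0 \<le> A - 2*(C/G)*C + (C/G)\<^sup>2*G" by (rule nonneg)
  also have "\<dots> = A - C\<^sup>2/G" using G by (simp add: power2_eq_square field_simps)
  finally show ?thesis using G by (simp add: divide_le_eq mult.commute)
qed

lemma abs_mult_le_sum_squares:
  fixes a b :: real
  shows "\<bar>a * b\<bar> \<le> a\<^sup>2 + b\<^sup>2"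
proof -
  have "0 \<le> (\<bar>a\<bar> - \<bar>b\<bar>)\<^sup>2" by simp
  then have "2 * (\<bar>a\<bar> * \<bar>b\<bar>) \<le> a\<^sup>2 + b\<^sup>2"
    by (simp add: power2_eq_square algebra_simps)
  moreover have "0 \<le> \<bar>a\<bar> * \<bar>b\<bar>" by simp
  ultimately show ?thesis unfolding abs_mult by linarith
qed

lemma Cauchy_Schwarz_suminf:
  fixes a b :: "nat \<Rightarrow> real"
  assumes a: "summable (\<lambda>k. (a k)\<^sup>2)" and b: "summable (\<lambda>k. (b k)\<^sup>2)"
  shows "summable (\<lambda>k. a k * b k)"
    and "(\<Sum>k. a k * b k)\<^sup>2 \<le> (\<Sum>k. (a k)\<^sup>2) * (\<Sum>k. (b k)\<^sup>2)"
proof -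
  show ab: "summable (\<lambda>k. a k * b k)"
    by (rule summable_comparison_test[OF _ summable_add[OF a b]])
       (simp add: abs_mult_le_sum_squares)
  have "(\<Sum>k<N. a k * b k)\<^sup>2 \<le> (\<Sum>k. (a k)\<^sup>2) * (\<Sum>k. (b k)\<^sup>2)" for N
  proof -
    have "(\<Sum>k<N. a k * b k)\<^sup>2 \<le> (\<Sum>k<N. (a k)\<^sup>2) * (\<Sum>k<N. (b k)\<^sup>2)"
      by (rule Cauchy_Schwarz_ineq_sum)
    also have "\<dots> \<le> (\<Sum>k. (a k)\<^sup>2) * (\<Sum>k. (b k)\<^sup>2)"
      by (intro mult_mono sum_le_suminf a b) (auto intro: sum_nonneg suminf_nonneg a b)
    finally show ?thesis .
  qed
  then show "(\<Sum>k. a k * b k)\<^sup>2 \<le> (\<Sum>k. (a k)\<^sup>2) * (\<Sum>k. (b k)\<^sup>2)"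
    by (intro LIMSEQ_le_const2[OF tendsto_power[OF summable_LIMSEQ[OF ab]]]) auto
qed

lemma Cauchy_Schwarz_integral:
  fixes f g :: "'a \<Rightarrow> real"
  assumes [measurable]: "f \<in> borel_measurable M" "g \<in> borel_measurable M"
    and f: "integrable M (\<lambda>x. (f x)\<^sup>2)" and g: "integrable M (\<lambda>x. (g x)\<^sup>2)"
  shows "integrable M (\<lambda>x. f x * g x)"
    and "(\<integral>x. f x * g x \<partial>M)\<^sup>2 \<le> (\<integral>x. (f x)\<^sup>2 \<partial>M) * (\<integral>x. (g x)\<^sup>2 \<partial>M)"
proof -
  show fg: "integrable M (\<lambda>x. f x * g x)"
    by (rule Bochner_Integration.integrable_bound[OF Bochner_Integration.integrable_add[OF f g]])
       (auto simp: abs_mult_le_sum_squares)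
  have "0 \<le> (\<integral>x. (f x)\<^sup>2 \<partial>M) - 2*t*(\<integral>x. f x * g x \<partial>M) + t\<^sup>2*(\<integral>x. (g x)\<^sup>2 \<partial>M)" for t
  proof -
    have "0 \<le> (\<integral>x. (f x - t * g x)\<^sup>2 \<partial>M)" by simp
    also have "(\<lambda>x. (f x - t * g x)\<^sup>2) = (\<lambda>x. ((f x)\<^sup>2 - (2*t) * (f x * g x)) + t\<^sup>2 * (g x)\<^sup>2)"
      by (simp add: power2_eq_square algebra_simps)
    also have "(\<integral>x. ((f x)\<^sup>2 - (2*t) * (f x * g x)) + t\<^sup>2 * (g x)\<^sup>2 \<partial>M)
        = (\<integral>x. (f x)\<^sup>2 \<partial>M) - 2*t*(\<integral>x. f x * g x \<partial>M) + t\<^sup>2*(\<integral>x. (g x)\<^sup>2 \<partial>M)"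
      using f g fg by simp
    finally show ?thesis .
  qed
  from nonneg_quadratic_imp_discriminant_le[OF this]
  show "(\<integral>x. f x * g x \<partial>M)\<^sup>2 \<le> (\<integral>x. (f x)\<^sup>2 \<partial>M) * (\<integral>x. (g x)\<^sup>2 \<partial>M)"
    by (simp add: mult.commute)
qed

lemma bounded_coordinates_convergent_subseq:
  fixes a :: "nat \<Rightarrow> 'i::countable \<Rightarrow> real"
  assumes "\<And>n i. \<bar>a n i\<bar> \<le> b i"
  obtains r d where "strict_mono r" "\<And>i. (\<lambda>n. a (r n) i) \<longlonglongrightarrow> d i"
proof -
  let ?K = "Pi\<^sub>E UNIV (\<lambda>i. {-b i..b i})"
  have "compactin (product_topology (\<lambda>i. euclidean) UNIV) ?K"
    by (simp add: compactin_PiE)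
  then have "seq_compact ?K"
    by (simp add: euclidean_product_topology compact_imp_seq_compact)
  moreover have "a n \<in> ?K" for n
    using assms by (simp add: PiE_iff abs_le_iff) (metis minus_le_iff)
  ultimately obtain d r where r: "strict_mono r" and lim: "(a \<circ> r) \<longlonglongrightarrow> d"
    by (metis seq_compactE)
  have "(\<lambda>n. a (r n) i) \<longlonglongrightarrow> d i" for i
    using limitin_componentwise[of "\<lambda>i. euclidean" UNIV "a \<circ> r" d sequentially] lim
    by (simp add: euclidean_product_topology comp_def)
  with r show thesis by (rule that)
qed

lemma dominated_seq_l2_convergent_subseq:
  fixes a :: "nat \<Rightarrow> nat \<Rightarrow> real"
  assumes c: "summable c" and dom: "\<And>n k. (a n k)\<^sup>2 \<le> c k"
  obtains r h where "strict_mono r" "summable (\<lambda>k. (h k)\<^sup>2)"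
    "(\<lambda>n. \<Sum>k. (a (r n) k - h k)\<^sup>2) \<longlonglongrightarrow> 0"
proof -
  have "\<bar>a n k\<bar> \<le> sqrt (c k)" for n k
    using dom by (metis power2_abs real_le_rsqrt)
  then obtain r h where r: "strict_mono r" and h: "\<And>k. (\<lambda>n. a (r n) k) \<longlonglongrightarrow> h k"
    by (rule bounded_coordinates_convergent_subseq[of a "\<lambda>k. sqrt (c k)"]) (rule that)
  have hc: "(h k)\<^sup>2 \<le> c k" for k
    by (rule LIMSEQ_le_const2[OF tendsto_power[OF h]]) (use dom in auto)
  have "summable (\<lambda>k. (h k)\<^sup>2)"
    by (rule summable_comparison_test[OF _ c]) (use hc in auto)
  moreover have "norm ((a (r n) k - h k)\<^sup>2) \<le> 4 * c k" for n k
  proof -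
    have "(a (r n) k - h k)\<^sup>2 \<le> 2*(a (r n) k)\<^sup>2 + 2*(h k)\<^sup>2"
      using zero_le_power2[of "a (r n) k + h k"] by (simp add: power2_eq_square algebra_simps)
    then show ?thesis using dom[of "r n" k] hc[of k] by simp
  qed
  then have "(\<lambda>n. \<Sum>k. (a (r n) k - h k)\<^sup>2) \<longlonglongrightarrow> (\<Sum>k. 0)"
    by (intro tannerys_theorem[of "\<lambda>k n. (a (r n) k - h k)\<^sup>2" "\<lambda>k. 0" sequentially
          "\<lambda>k. 4 * c k", THEN conjunct2, THEN conjunct2])
       (use h summable_mult[OF c, of 4] in \<open>auto intro!: always_eventually tendsto_eq_intros\<close>)
  ultimately show thesis using that r by simp
qed

lemma l2_bounded_seq_coordinatewise_convergent_subseq: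
  fixes s :: "nat \<Rightarrow> nat \<Rightarrow> real"
  assumes s: "\<And>n. summable (\<lambda>k. (s n k)\<^sup>2)" and bound: "\<And>n. (\<Sum>k. (s n k)\<^sup>2) \<le> B"
  obtains r d where "strict_mono r" "summable (\<lambda>k. (d k)\<^sup>2)"
    "\<And>k. (\<lambda>n. s (r n) k) \<longlonglongrightarrow> d k"
    "\<And>n. summable (\<lambda>k. (s (r n) k - d k)\<^sup>2)" "\<And>n. (\<Sum>k. (s (r n) k - d k)\<^sup>2) \<le> 4 * B"
proof -
  have "(s n k)\<^sup>2 \<le> B" for n k
    using sum_le_suminf[OF s, of "{k}" n] bound[of n] by simp
  then have "\<bar>s n k\<bar> \<le> sqrt B" for n k
    by (metis power2_abs real_le_rsqrt)
  then obtain r d where r: "strict_mono r" and d: "\<And>k. (\<lambda>n. s (r n) k) \<longlonglongrightarrow> d k"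
    by (rule bounded_coordinates_convergent_subseq[of s "\<lambda>k. sqrt B"]) (rule that)
  have "(\<Sum>k<N. (d k)\<^sup>2) \<le> B" for N
  proof (rule LIMSEQ_le_const2)
    show "(\<lambda>n. \<Sum>k<N. (s (r n) k)\<^sup>2) \<longlonglongrightarrow> (\<Sum>k<N. (d k)\<^sup>2)"
      by (intro tendsto_sum tendsto_power d)
    have "(\<Sum>k<N. (s n k)\<^sup>2) \<le> B" for n
      using sum_le_suminf[OF s, of "{..<N}" n] bound[of n] by simp
    then show "\<exists>n0. \<forall>n\<ge>n0. (\<Sum>k<N. (s (r n) k)\<^sup>2) \<le> B" by blast
  qed
  then have ds: "summable (\<lambda>k. (d k)\<^sup>2)" and dB: "(\<Sum>k. (d k)\<^sup>2) \<le> B"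
    by (auto intro!: summableI_nonneg_bounded suminf_le_const)
  have diff: "(s (r n) k - d k)\<^sup>2 \<le> 2 * (s (r n) k)\<^sup>2 + 2 * (d k)\<^sup>2" for n k
    using zero_le_power2[of "s (r n) k + d k"] by (simp add: power2_eq_square algebra_simps)
  have sum2: "summable (\<lambda>k. 2 * (s (r n) k)\<^sup>2 + 2 * (d k)\<^sup>2)" for n
    using s ds by (intro summable_add summable_mult)
  have es: "summable (\<lambda>k. (s (r n) k - d k)\<^sup>2)" for n
    by (rule summable_comparison_test[OF _ sum2]) (use diff in auto)
  have "(\<Sum>k. (s (r n) k - d k)\<^sup>2) \<le> 4 * B" for n
  proof -
    have "(\<Sum>k. (s (r n) k - d k)\<^sup>2) \<le> (\<Sum>k. 2 * (s (r n) k)\<^sup>2 + 2 * (d k)\<^sup>2)"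
      by (rule suminf_le[OF diff es sum2])
    also have "\<dots> = 2 * (\<Sum>k. (s (r n) k)\<^sup>2) + 2 * (\<Sum>k. (d k)\<^sup>2)"
      using s ds by (simp add: suminf_add[symmetric] suminf_mult summable_mult)
    also have "\<dots> \<le> 4 * B" using bound[of "r n"] dB by simp
    finally show ?thesis .
  qed
  with r ds d es show thesis by (rule that)
qed

lemma abs_less_of_power2_less:
  fixes x y :: real
  assumes "x\<^sup>2 < y\<^sup>2" "0 \<le> y"
  shows "\<bar>x\<bar> < y"
  using assms by (metis abs_ge_zero abs_of_nonneg power2_abs power_less_imp_less_base)

lemma suminf_mult_tendsto_zero:
  fixes e :: "nat \<Rightarrow> nat \<Rightarrow> real" and u :: "nat \<Rightarrow> real"
  assumes e: "\<And>n. summable (\<lambda>k. (e n k)\<^sup>2)" and eD: "\<And>n. (\<Sum>k. (e n k)\<^sup>2) \<le> D"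
    and lim: "\<And>k. (\<lambda>n. e n k) \<longlonglongrightarrow> 0" and u: "summable (\<lambda>k. (u k)\<^sup>2)"
  shows "(\<lambda>n. \<Sum>k. e n k * u k) \<longlonglongrightarrow> 0"
proof (rule LIMSEQ_I)
  fix \<epsilon> :: real assume \<epsilon>: "0 < \<epsilon>"
  have D: "0 \<le> D" using eD[of 0] suminf_nonneg[OF e[of 0]] by (meson order_trans zero_le_power2)
  have "0 < \<epsilon>\<^sup>2/(4*(D+1))" using \<epsilon> D by simp
  from suminf_exist_split[OF this u] obtain K where
    "\<And>n. n \<ge> K \<Longrightarrow> norm (\<Sum>i. (u (i + n))\<^sup>2) < \<epsilon>\<^sup>2/(4*(D+1))" by blast
  then have tail: "(\<Sum>k. (u (k + K))\<^sup>2) < \<epsilon>\<^sup>2/(4*(D+1))" by fastforce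
  have u_shift: "summable (\<lambda>k. (u (k + K))\<^sup>2)"
    using u by (simp add: summable_iff_shift[of "\<lambda>k. (u k)\<^sup>2"])
  have tail0: "0 \<le> (\<Sum>k. (u (k + K))\<^sup>2)"
    by (intro suminf_nonneg u_shift) simp
  have "(\<lambda>n. \<Sum>k<K. e n k * u k) \<longlonglongrightarrow> 0"
    using tendsto_sum[of "{..<K}" "\<lambda>k n. e n k * u k" "\<lambda>k. 0" sequentially]
    by (simp add: lim tendsto_mult_left_zero)
  from LIMSEQ_D[OF this, of "\<epsilon>/2"] \<epsilon> obtain n0 where
    head: "\<And>n. n \<ge> n0 \<Longrightarrow> \<bar>\<Sum>k<K. e n k * u k\<bar> < \<epsilon>/2" by auto
  show "\<exists>n0. \<forall>n\<ge>n0. norm ((\<Sum>k. e n k * u k) - 0) < \<epsilon>"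
  proof (intro exI allI impI)
    fix n assume n: "n \<ge> n0"
    have split: "(\<Sum>k. e n k * u k) = (\<Sum>k. e n (k+K) * u (k+K)) + (\<Sum>k<K. e n k * u k)"
      by (rule suminf_split_initial_segment[OF Cauchy_Schwarz_suminf(1)[OF e u]])
    have e_shift: "summable (\<lambda>k. (e n (k+K))\<^sup>2)"
      using e[of n] by (simp add: summable_iff_shift[of "\<lambda>k. (e n k)\<^sup>2"])
    have "(\<Sum>k. (e n (k+K))\<^sup>2) = (\<Sum>k. (e n k)\<^sup>2) - (\<Sum>k<K. (e n k)\<^sup>2)"
      by (rule suminf_minus_initial_segment[OF e])
    also have "\<dots> \<le> D" using eD[of n] sum_nonneg[of "{..<K}" "\<lambda>k. (e n k)\<^sup>2"] by simp
    finally have eK: "(\<Sum>k. (e n (k+K))\<^sup>2) \<le> D" .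
    have "(\<Sum>k. e n (k+K) * u (k+K))\<^sup>2 \<le> (\<Sum>k. (e n (k+K))\<^sup>2) * (\<Sum>k. (u (k + K))\<^sup>2)"
      by (rule Cauchy_Schwarz_suminf(2)[OF e_shift u_shift])
    also have "\<dots> \<le> (D+1) * (\<Sum>k. (u (k + K))\<^sup>2)"
      using eK tail0 by (intro mult_right_mono) auto
    also have "\<dots> < (D+1) * (\<epsilon>\<^sup>2/(4*(D+1)))"
      using tail D by (intro mult_strict_left_mono) auto
    also have "\<dots> = (\<epsilon>/2)\<^sup>2" using D by (simp add: power2_eq_square field_simps)
    finally have "\<bar>\<Sum>k. e n (k+K) * u (k+K)\<bar> < \<epsilon>/2"
      by (rule abs_less_of_power2_less) (use \<epsilon> in simp)
    then show "norm ((\<Sum>k. e n k * u k) - 0) < \<epsilon>"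
      using head[OF n] split by simp
  qed
qed

lemma integrable_restricted_power2:
  assumes "E \<in> sets M" and "v \<in> L2 M"
  shows "integrable M (\<lambda>x. (indicator E x * v x)\<^sup>2)"
proof -
  have "(\<lambda>x. (indicator E x * v x)\<^sup>2) = (\<lambda>x. (v x)\<^sup>2 * indicator E x)"
    by (auto simp: fun_eq_iff split: split_indicator)
  then show ?thesis
    using integrable_real_mult_indicator[of E M "\<lambda>x. (v x)\<^sup>2"] assms by (simp add: L2_def)
qed

lemma L2_inner_power2_le:
  assumes [measurable]: "E \<in> sets M" and f: "f \<in> L2_on M E" and v: "v \<in> L2 M"
  shows "integrable M (\<lambda>x. f x * v x)"
    and "(L2_inner M f v)\<^sup>2 \<le> (\<integral>x. (f x)\<^sup>2 \<partial>M) * (\<integral>x. (indicator E x * v x)\<^sup>2 \<partial>M)"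
proof -
  have [measurable]: "f \<in> borel_measurable M" "v \<in> borel_measurable M"
    using f v by (auto simp: L2_on_def L2_def)
  from Cauchy_Schwarz_integral[of f M "\<lambda>x. indicator E x * v x",
      OF _ _ _ integrable_restricted_power2[OF _ v]] f
  have cs: "integrable M (\<lambda>x. f x * (indicator E x * v x))"
    "(\<integral>x. f x * (indicator E x * v x) \<partial>M)\<^sup>2
       \<le> (\<integral>x. (f x)\<^sup>2 \<partial>M) * (\<integral>x. (indicator E x * v x)\<^sup>2 \<partial>M)"
    by (auto simp: L2_on_def L2_def)
  \<comment> \<open>f vanishes outside E, so the indicator may be dropped\<close>
  have eq: "x \<in> space M \<Longrightarrow> f x * (indicator E x * v x) = f x * v x" for x
    using f by (cases "x \<in> E") (auto simp: L2_on_def)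
  show "integrable M (\<lambda>x. f x * v x)"
    using cs(1) Bochner_Integration.integrable_cong[OF refl eq, of M] by simp
  show "(L2_inner M f v)\<^sup>2 \<le> (\<integral>x. (f x)\<^sup>2 \<partial>M) * (\<integral>x. (indicator E x * v x)\<^sup>2 \<partial>M)"
    using cs(2) Bochner_Integration.integral_cong[OF refl eq, of M] by (simp add: L2_inner_def)
qed

locale pointwise_square_summable =
  fixes \<mu> :: "'a measure" and E :: "'a set" and v :: "nat \<Rightarrow> 'a \<Rightarrow> real" and B :: real
  assumes E_sets [measurable]: "E \<in> sets \<mu>"
    and E_finite: "emeasure \<mu> E < \<infinity>"
    and v_L2: "\<And>k. v k \<in> L2 \<mu>"
    and v_bound: "\<And>x. x \<in> E \<Longrightarrow> summable (\<lambda>k. (v k x)\<^sup>2) \<and> (\<Sum>k. (v k x)\<^sup>2) \<le> B"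
begin

lemma v_measurable [measurable]: "v k \<in> borel_measurable \<mu>"
  using v_L2 by (auto simp: L2_def)

definition analysis :: "('a \<Rightarrow> real) \<Rightarrow> nat \<Rightarrow> real" where
  "analysis f = (\<lambda>k. L2_inner \<mu> f (v k))"

definition synthesis :: "(nat \<Rightarrow> real) \<Rightarrow> 'a \<Rightarrow> real" where
  "synthesis c = (\<lambda>x. indicator E x * (\<Sum>k. c k * v k x))"

lemma summable_integral_restricted_power2:
  "summable (\<lambda>k. \<integral>x. (indicator E x * v k x)\<^sup>2 \<partial>\<mu>)"
proof (rule summableI_nonneg_bounded[where x = "B * measure \<mu> E"])
  have int: "integrable \<mu> (\<lambda>x. (indicator E x * v k x)\<^sup>2)" for k
    by (rule integrable_restricted_power2[OF E_sets v_L2])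
  fix n
  show "0 \<le> (\<integral>x. (indicator E x * v n x)\<^sup>2 \<partial>\<mu>)" by simp
  have "(\<Sum>k<n. \<integral>x. (indicator E x * v k x)\<^sup>2 \<partial>\<mu>) = (\<integral>x. (\<Sum>k<n. (indicator E x * v k x)\<^sup>2) \<partial>\<mu>)"
    using int by (simp add: Bochner_Integration.integral_sum)
  also have "\<dots> \<le> (\<integral>x. B * indicator E x \<partial>\<mu>)"
  proof (rule integral_mono)
    show "integrable \<mu> (\<lambda>x. \<Sum>k<n. (indicator E x * v k x)\<^sup>2)" using int by auto
    show "integrable \<mu> (\<lambda>x. B * indicator E x)" using E_finite by simp
    show "(\<Sum>k<n. (indicator E x * v k x)\<^sup>2) \<le> B * indicator E x" for x
    proof (cases "x \<in> E")
      case True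
      then have "(\<Sum>k<n. (v k x)\<^sup>2) \<le> (\<Sum>k. (v k x)\<^sup>2)"
        using v_bound by (intro sum_le_suminf) auto
      then show ?thesis using True v_bound[OF True] by simp
    qed simp
  qed
  also have "\<dots> = B * measure \<mu> E" using E_finite by simp
  finally show "(\<Sum>k<n. \<integral>x. (indicator E x * v k x)\<^sup>2 \<partial>\<mu>) \<le> B * measure \<mu> E" .
qed

lemma compact_operator_analysis:
  "compact_operator (L2_on \<mu> E) (L2_norm \<mu>) l2 l2_norm analysis"
proof -
  define c where "c k = (\<integral>x. (indicator E x * v k x)\<^sup>2 \<partial>\<mu>)" for k
  have c: "summable c" and c0: "0 \<le> c k" for k
    unfolding c_def by (auto intro: summable_integral_restricted_power2)
  note inner = L2_inner_power2_le[OF E_sets _ v_L2, folded c_def]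
  show ?thesis
    unfolding compact_operator_def
  proof (intro conjI ballI allI impI)
    fix f assume f: "f \<in> L2_on \<mu> E"
    show "analysis f \<in> l2"
      unfolding l2_def analysis_def
      by (rule CollectI, rule summable_comparison_test[OF _ summable_mult[OF c]])
         (use inner(2)[OF f] in auto)
  next
    fix f g a b assume f: "f \<in> L2_on \<mu> E" and g: "g \<in> L2_on \<mu> E"
    have "L2_inner \<mu> (\<lambda>x. a * f x + b * g x) (v k) = a * L2_inner \<mu> f (v k) + b * L2_inner \<mu> g (v k)"
      for k
      using inner(1)[OF f, of k] inner(1)[OF g, of k]
      by (simp add: L2_inner_def distrib_right mult.assoc)
    then show "analysis (\<lambda>x. a * f x + b * g x) = (\<lambda>k. a * analysis f k + b * analysis g k)"
      by (simp add: analysis_def)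
  next
    fix s :: "nat \<Rightarrow> 'a \<Rightarrow> real" and C :: real
    assume s: "\<forall>n. s n \<in> L2_on \<mu> E \<and> L2_norm \<mu> (s n) \<le> C"
    have "(\<integral>x. (s n x)\<^sup>2 \<partial>\<mu>) \<le> C\<^sup>2" for n
      using s by (auto simp: L2_norm_def intro: sqrt_le_D)
    then have "(analysis (s n) k)\<^sup>2 \<le> C\<^sup>2 * c k" for n k
      using inner(2)[of "s n" k] s mult_right_mono[OF _ c0] unfolding analysis_def
      by (meson order_trans)
    from dominated_seq_l2_convergent_subseq[OF summable_mult[OF c] this]
    obtain r h where "strict_mono r" "summable (\<lambda>k. (h k)\<^sup>2)"
      "(\<lambda>n. \<Sum>k. (analysis (s (r n)) k - h k)\<^sup>2) \<longlonglongrightarrow> 0" .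
    moreover from this(3) have "(\<lambda>n. l2_norm (\<lambda>k. analysis (s (r n)) k - h k)) \<longlonglongrightarrow> 0"
      unfolding l2_norm_def using tendsto_real_sqrt by fastforce
    ultimately show "\<exists>r h. strict_mono r \<and> h \<in> l2 \<and>
        (\<lambda>n. l2_norm (\<lambda>k. analysis (s (r n)) k - h k)) \<longlonglongrightarrow> 0"
      by (auto simp: l2_def)
  qed
qed

lemma suminf_mult_v_power2_le:
  assumes x: "x \<in> E" and c: "c \<in> l2"
  shows "summable (\<lambda>k. c k * v k x)" and "(\<Sum>k. c k * v k x)\<^sup>2 \<le> (\<Sum>k. (c k)\<^sup>2) * B"
proof -
  have c2: "summable (\<lambda>k. (c k)\<^sup>2)" using c by (simp add: l2_def)
  have v2: "summable (\<lambda>k. (v k x)\<^sup>2)" using v_bound[OF x] by blast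
  show "summable (\<lambda>k. c k * v k x)" by (rule Cauchy_Schwarz_suminf(1)[OF c2 v2])
  have "(\<Sum>k. c k * v k x)\<^sup>2 \<le> (\<Sum>k. (c k)\<^sup>2) * (\<Sum>k. (v k x)\<^sup>2)"
    by (rule Cauchy_Schwarz_suminf(2)[OF c2 v2])
  also have "\<dots> \<le> (\<Sum>k. (c k)\<^sup>2) * B"
    using v_bound[OF x] c2 by (intro mult_left_mono suminf_nonneg) auto
  finally show "(\<Sum>k. c k * v k x)\<^sup>2 \<le> (\<Sum>k. (c k)\<^sup>2) * B" .
qed

lemma synthesis_power2_le:
  assumes "c \<in> l2"
  shows "(synthesis c x)\<^sup>2 \<le> ((\<Sum>k. (c k)\<^sup>2) * B) * indicator E x"
  using suminf_mult_v_power2_le(2)[OF _ assms, of x]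
  by (cases "x \<in> E") (simp_all add: synthesis_def)

lemma synthesis_L2_on:
  assumes c: "c \<in> l2"
  shows "synthesis c \<in> L2_on \<mu> E"
proof -
  have [measurable]: "synthesis c \<in> borel_measurable \<mu>"
    unfolding synthesis_def by measurable
  have "integrable \<mu> (\<lambda>x. (synthesis c x)\<^sup>2)"
  proof (rule Bochner_Integration.integrable_bound)
    show "integrable \<mu> (\<lambda>x. ((\<Sum>k. (c k)\<^sup>2) * B) * indicator E x)"
      using E_finite by simp
    show "AE x in \<mu>. norm ((synthesis c x)\<^sup>2) \<le> norm (((\<Sum>k. (c k)\<^sup>2) * B) * indicator E x)"
      using synthesis_power2_le[OF c] by (auto intro: order_trans[OF _ abs_ge_self])
  qed simp
  then show ?thesis by (simp add: L2_on_def L2_def synthesis_def)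
qed

lemma synthesis_linear:
  assumes c: "c \<in> l2" and d: "d \<in> l2"
  shows "synthesis (\<lambda>k. a * c k + b * d k) = (\<lambda>x. a * synthesis c x + b * synthesis d x)"
proof
  fix x show "synthesis (\<lambda>k. a * c k + b * d k) x = a * synthesis c x + b * synthesis d x"
  proof (cases "x \<in> E")
    case True
    have "summable (\<lambda>k. c k * v k x)" "summable (\<lambda>k. d k * v k x)"
      using suminf_mult_v_power2_le(1)[OF True] c d by auto
    then have "(\<Sum>k. a * (c k * v k x) + b * (d k * v k x))
        = a * (\<Sum>k. c k * v k x) + b * (\<Sum>k. d k * v k x)"
      by (simp add: suminf_add[symmetric] suminf_mult summable_mult)
    then show ?thesis using True by (simp add: synthesis_def algebra_simps)
  qed (simp add: synthesis_def)
qed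

lemma synthesis_tendsto_zero:
  assumes e: "\<And>n. summable (\<lambda>k. (e n k)\<^sup>2)" and eD: "\<And>n. (\<Sum>k. (e n k)\<^sup>2) \<le> D"
    and lim: "\<And>k. (\<lambda>n. e n k) \<longlonglongrightarrow> 0"
  shows "(\<lambda>n. L2_norm \<mu> (synthesis (e n))) \<longlonglongrightarrow> 0"
proof -
  have el2: "e n \<in> l2" for n using e by (simp add: l2_def)
  have "(\<lambda>n. \<integral>x. (synthesis (e n) x)\<^sup>2 \<partial>\<mu>) \<longlonglongrightarrow> (\<integral>x. 0 \<partial>\<mu>)"
  proof (rule integral_dominated_convergence[where w = "\<lambda>x. (D * B) * indicator E x"])
    show "(\<lambda>x. (synthesis (e n) x)\<^sup>2) \<in> borel_measurable \<mu>" for n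
      unfolding synthesis_def by measurable
    show "integrable \<mu> (\<lambda>x. (D * B) * indicator E x)" using E_finite by simp
    show "AE x in \<mu>. (\<lambda>n. (synthesis (e n) x)\<^sup>2) \<longlonglongrightarrow> 0"
    proof (rule AE_I2)
      fix x show "(\<lambda>n. (synthesis (e n) x)\<^sup>2) \<longlonglongrightarrow> 0"
      proof (cases "x \<in> E")
        case True
        have "(\<lambda>n. \<Sum>k. e n k * v k x) \<longlonglongrightarrow> 0"
          using suminf_mult_tendsto_zero[OF e eD lim, of "\<lambda>k. v k x"] v_bound[OF True] by blast
        from tendsto_power[OF this, of 2] True show ?thesis by (simp add: synthesis_def)
      qed (simp add: synthesis_def)
    qed
    show "AE x in \<mu>. norm ((synthesis (e n) x)\<^sup>2) \<le> (D * B) * indicator E x" for n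
    proof (rule AE_I2)
      fix x show "norm ((synthesis (e n) x)\<^sup>2) \<le> (D * B) * indicator E x"
      proof (cases "x \<in> E")
        case True
        then have "0 \<le> B" using v_bound[OF True] suminf_nonneg[of "\<lambda>k. (v k x)\<^sup>2"] by auto
        then have "(\<Sum>k. (e n k)\<^sup>2) * B \<le> D * B" by (intro mult_right_mono eD)
        then show ?thesis using synthesis_power2_le[OF el2, of n x] True by simp
      qed (simp add: synthesis_def)
    qed
  qed simp
  then have "(\<lambda>n. sqrt (\<integral>x. (synthesis (e n) x)\<^sup>2 \<partial>\<mu>)) \<longlonglongrightarrow> sqrt 0"
    by (intro tendsto_real_sqrt) simp
  then show ?thesis by (simp add: L2_norm_def)
qed

lemma compact_operator_synthesis:
  "compact_operator l2 l2_norm (L2_on \<mu> E) (L2_norm \<mu>) synthesis"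
  unfolding compact_operator_def
proof (intro conjI ballI allI impI)
  fix c assume "c \<in> l2"
  then show "synthesis c \<in> L2_on \<mu> E" by (rule synthesis_L2_on)
next
  fix c d a b assume "c \<in> l2" "d \<in> l2"
  then show "synthesis (\<lambda>k. a * c k + b * d k) = (\<lambda>x. a * synthesis c x + b * synthesis d x)"
    by (rule synthesis_linear)
next
  fix s :: "nat \<Rightarrow> nat \<Rightarrow> real" and C :: real
  assume s: "\<forall>n. s n \<in> l2 \<and> l2_norm (s n) \<le> C"
  have s2: "summable (\<lambda>k. (s n k)\<^sup>2)" for n using s by (simp add: l2_def)
  have "(\<Sum>k. (s n k)\<^sup>2) \<le> C\<^sup>2" for n
    using s by (auto simp: l2_norm_def intro: sqrt_le_D)
  then obtain r d where r: "strict_mono r" and d: "summable (\<lambda>k. (d k)\<^sup>2)"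
    and lim: "\<And>k. (\<lambda>n. s (r n) k) \<longlonglongrightarrow> d k"
    and diff2: "\<And>n. summable (\<lambda>k. (s (r n) k - d k)\<^sup>2)"
    and diff_bound: "\<And>n. (\<Sum>k. (s (r n) k - d k)\<^sup>2) \<le> 4 * C\<^sup>2"
    by (rule l2_bounded_seq_coordinatewise_convergent_subseq[of s "C\<^sup>2", OF s2]) (rule that)
  have dl2: "d \<in> l2" using d by (simp add: l2_def)
  have "(\<lambda>x. synthesis (s (r n)) x - synthesis d x) = synthesis (\<lambda>k. s (r n) k - d k)" for n
    using synthesis_linear[of "s (r n)" d 1 "-1"] s dl2 by simp
  moreover have "(\<lambda>n. L2_norm \<mu> (synthesis (\<lambda>k. s (r n) k - d k))) \<longlonglongrightarrow> 0"
    by (rule synthesis_tendsto_zero[OF diff2 diff_bound]) (use lim in \<open>simp add: LIM_zero\<close>)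
  ultimately show "\<exists>r h. strict_mono r \<and> h \<in> L2_on \<mu> E \<and>
      (\<lambda>n. L2_norm \<mu> (\<lambda>y. synthesis (s (r n)) y - h y)) \<longlonglongrightarrow> 0"
    using r synthesis_L2_on[OF dl2] by (intro exI[of _ r] exI[of _ "synthesis d"]) simp
qed

end

theorem lemma2p2:
  fixes \<mu> :: "'a measure" and E :: "'a set" and v :: "nat \<Rightarrow> 'a \<Rightarrow> real" and M :: real
  assumes "E \<in> sets \<mu>"
    and "0 < emeasure \<mu> E" and "emeasure \<mu> E < \<infinity>"
    and "\<And>k. v k \<in> L2 \<mu>"
    and "\<And>x. x \<in> E \<Longrightarrow> summable (\<lambda>k. (v k x)\<^sup>2) \<and> (\<Sum>k. (v k x)\<^sup>2) \<le> M\<^sup>2"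
  shows "compact_operator (L2_on \<mu> E) (L2_norm \<mu>) l2 l2_norm
           (\<lambda>f. (\<lambda>k. L2_inner \<mu> f (v k))) \<and>
         compact_operator l2 l2_norm (L2_on \<mu> E) (L2_norm \<mu>)
           (\<lambda>c. (\<lambda>x. indicator E x * (\<Sum>k. c k * v k x)))"
proof -
  interpret pointwise_square_summable \<mu> E v "M\<^sup>2"
    using assms(1,3-5) by unfold_locales auto
  show ?thesis
    using compact_operator_analysis compact_operator_synthesis
    by (simp add: analysis_def[abs_def] synthesis_def[abs_def])
qed

end
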